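(* Let $A$ be a finite alphabet, $n\ge1$, and $L\subseteq (A^\ast)^n$ an $n$-variable language. The following are equivalent: (i) $L$ is the accepted language of an FAA; (ii) $L$ is the accepted language of a DFAA; (iii) $L$ is the accepted language of an SAA.
   Context: $A^\ast$ is the set of finite words over $A$, $[n]=\{1,\ldots,n\}$, $\$$ a new symbol, and $A^\$=(A\sqcup\{\$\})^n\setminus\{(\$,\ldots,\$)\}$ the padded alphabet. Let $E=P(P([n])\setminus\{\emptyset\})$ (sets of filters; a filter is a nonempty subset of $[n]$). An FAA (non-deterministic filter asynchronous automaton) is a quadruple $(S,S_0,\Delta,S_f)$ with $S$ a finite set of states, $S_0\subseteq S$ initial states, $S_f\subseteq S$ accept states, and $\Delta:S\times A^\$\to P(S)\times E$, such that for all $\overline\sigma=(\sigma_1,\ldots,\sigma_n)\in A^\$$ and $s\in S$, if $\sigma_i=\$$ and the set of next states of $\Delta(s,\overline\sigma)$ is nonempty, then $i$ lies in none of the filters of $\Delta(s,\overline\sigma)$. It accepts $(w_1,\ldots,w_n)$ as follows: the words are written on $n$ tapes with a head on each; the symbol under head $i$ is the next unread letter of $w_i$, or $\$$ if $w_i$ is fully read. Starting in a state of $S_0$, at a state $s$ with current symbol tuple $\overline\sigma$, if $\Delta(s,\overline\sigma)=(T,X)$ one may choose a filter $\chi\in X$ and a state $t\in T$, advance the heads with index in $\chi$ by one position, and move to $t$. The tuple is accepted if some such run reads all tapes completely and ends in a state of $S_f$. A DFAA is an FAA in which $|X|\le1$ whenever $\Delta(s,\overline\sigma)=(T,X)$.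 An SAA (non-deterministic semi-sorted asynchronous automaton) is a non-deterministic finite state automaton over $A\sqcup\{\$\}$ (possibly several start states and $\epsilon$-transitions) with a partition of its states into $S_1,\ldots,S_n$; it accepts $(w_1,\ldots,w_n)$ iff there is a path from a start state to an accept state reading a shuffle of $(w_1\$,\ldots,w_n\$)$ (an ordering of all letters respecting the order in each word), where a transition out of a state in $S_i$ reads the next letter of tape $i$. *)

theory Defs
  imports Main
begin

text \<open>The alphabet A is a finite type 'a. The padding symbol \$ is None,
  a letter c of A is Some c. Tape indices are 0..n-1 (instead of 1..n).
  An n-tuple of words is a list of n words.\<close>

definition padded_alphabet :: "nat \<Rightarrow> 'a option list set" where
  "padded_alphabet n = {\<sigma>. length \<sigma> = n \<and> \<sigma> \<noteq> replicate n None}"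

definition filters :: "nat \<Rightarrow> nat set set" where
  "filters n = {\<chi>. \<chi> \<noteq> {} \<and> \<chi> \<subseteq> {..<n}}"

record 'a faa =
  f_states :: "nat set"
  f_init :: "nat set"
  f_final :: "nat set"
  f_delta :: "nat \<Rightarrow> 'a option list \<Rightarrow> nat set \<times> nat set set"

definition faa_wf :: "nat \<Rightarrow> 'a faa \<Rightarrow> bool" where
  "faa_wf n M \<longleftrightarrow> finite (f_states M) \<and> f_init M \<subseteq> f_states M \<and> f_final M \<subseteq> f_states M \<and>
    (\<forall>s\<in>f_states M. \<forall>\<sigma>\<in>padded_alphabet n.
       fst (f_delta M s \<sigma>) \<subseteq> f_states M \<and> snd (f_delta M s \<sigma>) \<subseteq> filters n \<and>
       (\<forall>i<n. \<sigma> ! i = None \<and> fst (f_delta M s \<sigma>) \<noteq> {} \<longrightarrow>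
          (\<forall>\<chi>\<in>snd (f_delta M s \<sigma>). i \<notin> \<chi>)))"

definition is_dfaa :: "nat \<Rightarrow> 'a faa \<Rightarrow> bool" where
  "is_dfaa n M \<longleftrightarrow> faa_wf n M \<and>
    (\<forall>s\<in>f_states M. \<forall>\<sigma>\<in>padded_alphabet n. card (snd (f_delta M s \<sigma>)) \<le> 1)"

text \<open>Symbols under the heads at positions p (None = \$ once the word is fully read).\<close>
definition cur_sym :: "'a list list \<Rightarrow> nat list \<Rightarrow> 'a option list" where
  "cur_sym ws p = map (\<lambda>i. if p ! i < length (ws ! i) then Some (ws ! i ! (p ! i)) else None)
                     [0..<length ws]"

definition advance :: "nat set \<Rightarrow> nat list \<Rightarrow> nat list" where
  "advance \<chi> p = map (\<lambda>i. if i \<in> \<chi> then Suc (p ! i) else p ! i) [0..<length p]"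

definition faa_step :: "nat \<Rightarrow> 'a faa \<Rightarrow> 'a list list \<Rightarrow> nat \<times> nat list \<Rightarrow> nat \<times> nat list \<Rightarrow> bool" where
  "faa_step n M ws c c' \<longleftrightarrow>
     (let s = fst c; p = snd c; t = fst c'; p' = snd c'; \<sigma> = cur_sym ws p in
      s \<in> f_states M \<and> \<sigma> \<in> padded_alphabet n \<and>
      (\<exists>\<chi>\<in>snd (f_delta M s \<sigma>). t \<in> fst (f_delta M s \<sigma>) \<and> p' = advance \<chi> p))"

definition faa_accepts :: "nat \<Rightarrow> 'a faa \<Rightarrow> 'a list list \<Rightarrow> bool" where
  "faa_accepts n M ws \<longleftrightarrow> length ws = n \<and>
     (\<exists>s0\<in>f_init M. \<exists>sf\<in>f_final M.
        (faa_step n M ws)\<^sup>*\<^sup>* (s0, replicate n 0) (sf, map length ws))"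

definition faa_lang :: "nat \<Rightarrow> 'a faa \<Rightarrow> 'a list list set" where
  "faa_lang n M = {ws. faa_accepts n M ws}"

text \<open>SAA: NFA over A + \{\$\} (letter Some (Some c) = c, Some None = \$, None = epsilon),
  with a map q_part assigning each state its block S_i of the partition.\<close>
record 'a saa =
  q_states :: "nat set"
  q_init :: "nat set"
  q_final :: "nat set"
  q_trans :: "(nat \<times> 'a option option \<times> nat) set"
  q_part :: "nat \<Rightarrow> nat"

definition saa_wf :: "nat \<Rightarrow> 'a saa \<Rightarrow> bool" where
  "saa_wf n M \<longleftrightarrow> finite (q_states M) \<and> q_init M \<subseteq> q_states M \<and> q_final M \<subseteq> q_states M \<and>
     (\<forall>(q, a, q')\<in>q_trans M. q \<in> q_states M \<and> q' \<in> q_states M) \<and>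
     (\<forall>q\<in>q_states M. q_part M q < n)"

text \<open>Positions p: p!i letters of (ws!i)\$ have been read (p!i ranges up to length + 1).\<close>
definition saa_step :: "nat \<Rightarrow> 'a saa \<Rightarrow> 'a list list \<Rightarrow> nat \<times> nat list \<Rightarrow> nat \<times> nat list \<Rightarrow> bool" where
  "saa_step n M ws c c' \<longleftrightarrow>
     (let q = fst c; p = snd c; q' = fst c'; p' = snd c'; i = q_part M q in
      ((q, None, q') \<in> q_trans M \<and> p' = p) \<or>
      (\<exists>a. (q, Some a, q') \<in> q_trans M \<and> i < n \<and> p ! i \<le> length (ws ! i) \<and>
           a = (if p ! i < length (ws ! i) then Some (ws ! i ! (p ! i)) else None) \<and>
           p' = p[i := Suc (p ! i)]))"

definition saa_accepts :: "nat \<Rightarrow> 'a saa \<Rightarrow> 'a list list \<Rightarrow> bool" where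
  "saa_accepts n M ws \<longleftrightarrow> length ws = n \<and>
     (\<exists>q0\<in>q_init M. \<exists>qf\<in>q_final M.
        (saa_step n M ws)\<^sup>*\<^sup>* (q0, replicate n 0) (qf, map (\<lambda>w. Suc (length w)) ws))"

definition saa_lang :: "nat \<Rightarrow> 'a saa \<Rightarrow> 'a list list set" where
  "saa_lang n M = {ws. saa_accepts n M ws}"

end

theory Submission
  imports Defs
begin

text \<open>A DFAA is an FAA, so it suffices to turn an FAA into an SAA and an SAA into a DFAA.

  An SAA simulates an FAA by keeping the symbols under the n heads in a buffer that it fills
  in a first pass over the tapes. A move of the FAA with filter \<chi> becomes one \<open>\<epsilon>\<close>-move,
  which chooses \<chi> and the target state, followed by reads, one tape of \<chi> at a time, that
  refill the buffer. Since the buffer always looks one symbol ahead, every SAA head is one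
  position beyond the corresponding FAA head.

  A DFAA simulates an SAA by guessing, in its state, the tape j on which the SAA reads its next
  letter of A, and always moving with the single filter \<open>{j}\<close>. Between two letters the SAA
  only makes \<open>\<epsilon>\<close>-moves and reads the end marker \$ of exhausted tapes; the DFAA performs these
  silent moves within one step and records in its state the set D of tapes whose \$ has been
  read.\<close>

lemma length_advance [simp]: "length (advance \<chi> p) = length p"
  by (simp add: advance_def)

lemma nth_advance [simp]:
  "i < length p \<Longrightarrow> advance \<chi> p ! i = (if i \<in> \<chi> then Suc (p ! i) else p ! i)"
  by (simp add: advance_def)

lemma length_cur_sym [simp]: "length (cur_sym ws p) = length ws"
  by (simp add: cur_sym_def)

lemma nth_cur_sym [simp]:
  "i < length ws \<Longrightarrow>
    cur_sym ws p ! i = (if p ! i < length (ws ! i) then Some (ws ! i ! (p ! i)) else None)"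
  by (simp add: cur_sym_def)

lemma advance_empty [simp]: "advance {} p = p"
  by (rule nth_equalityI) auto

lemma advance_insert:
  "i \<notin> \<chi> \<Longrightarrow> i < length p \<Longrightarrow> advance (insert i \<chi>) p = (advance \<chi> p)[i := Suc (p ! i)]"
  by (rule nth_equalityI) (auto simp: nth_list_update)

lemma advance_advance_singleton:
  "i \<notin> \<chi> \<Longrightarrow> i < length p \<Longrightarrow> advance \<chi> (advance {i} p) = (advance \<chi> p)[i := Suc (p ! i)]"
  by (rule nth_equalityI) (auto simp: nth_list_update)

lemma advance_lessThan: "length p = n \<Longrightarrow> advance {..<n} p = map Suc p"
  by (rule nth_equalityI) auto

lemma cur_sym_map_length: "cur_sym ws (map length ws) = replicate (length ws) None"
  by (rule nth_equalityI) auto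

section \<open>Automata over arbitrary state types\<close>

lemma rtranclp_rename_states_iff:
  assumes inj: "inj_on f Q"
    and forward: "\<And>q p q' p'. q \<in> Q \<Longrightarrow> R (q, p) (q', p') \<Longrightarrow> q' \<in> Q \<and> S (f q, p) (f q', p')"
    and backward: "\<And>q p y. q \<in> Q \<Longrightarrow> S (f q, p) y \<Longrightarrow>
                      \<exists>q' p'. y = (f q', p') \<and> q' \<in> Q \<and> R (q, p) (q', p')"
    and "q0 \<in> Q" and "qf \<in> Q"
  shows "S\<^sup>*\<^sup>* (f q0, p0) (f qf, pf) \<longleftrightarrow> R\<^sup>*\<^sup>* (q0, p0) (qf, pf)"
proof
  have "\<exists>q' p'. y = (f q', p') \<and> q' \<in> Q \<and> R\<^sup>*\<^sup>* (q0, p0) (q', p')"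
    if "S\<^sup>*\<^sup>* (f q0, p0) y" for y
    using that
  proof (induction rule: rtranclp_induct)
    case base
    then show ?case using \<open>q0 \<in> Q\<close> by blast
  next
    case (step y z)
    then obtain q' p' where "y = (f q', p')" "q' \<in> Q" "R\<^sup>*\<^sup>* (q0, p0) (q', p')"
      by blast
    with backward[of q' p' z] step.hyps(2) show ?case
      by (blast intro: rtranclp.rtrancl_into_rtrancl)
  qed
  then show "R\<^sup>*\<^sup>* (q0, p0) (qf, pf)" if "S\<^sup>*\<^sup>* (f q0, p0) (f qf, pf)"
    using that inj \<open>qf \<in> Q\<close> by (blast dest: inj_onD)
next
  have "q \<in> Q \<and> S\<^sup>*\<^sup>* (f q0, p0) (f q, p)" if "R\<^sup>*\<^sup>* (q0, p0) (q, p)" for q p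
    using that
  proof (induction rule: rtranclp_induct2)
    case refl
    then show ?case using \<open>q0 \<in> Q\<close> by simp
  next
    case (step q p q' p')
    then show ?case using forward by (blast intro: rtranclp.rtrancl_into_rtrancl)
  qed
  then show "S\<^sup>*\<^sup>* (f q0, p0) (f qf, pf)" if "R\<^sup>*\<^sup>* (q0, p0) (qf, pf)"
    using that by blast
qed

text \<open>The step relations of SAAs and FAAs for states of an arbitrary type. The constructions
  below use structured states, which the following two lemmas rename into natural numbers.\<close>

fun gen_saa_step ::
  "nat \<Rightarrow> ('q \<times> 'a option option \<times> 'q) set \<Rightarrow> ('q \<Rightarrow> nat) \<Rightarrow> 'a list list \<Rightarrow>
    'q \<times> nat list \<Rightarrow> 'q \<times> nat list \<Rightarrow> bool" where
  "gen_saa_step n T part ws (q, p) (q', p') \<longleftrightarrow>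
     ((q, None, q') \<in> T \<and> p' = p) \<or>
     (\<exists>a. (q, Some a, q') \<in> T \<and> part q < n \<and> p ! part q \<le> length (ws ! part q) \<and>
        a = (if p ! part q < length (ws ! part q) then Some (ws ! part q ! (p ! part q)) else None) \<and>
        p' = p[part q := Suc (p ! part q)])"

definition gen_saa_accepts ::
  "nat \<Rightarrow> 'q set \<Rightarrow> 'q set \<Rightarrow> ('q \<times> 'a option option \<times> 'q) set \<Rightarrow> ('q \<Rightarrow> nat) \<Rightarrow>
    'a list list \<Rightarrow> bool" where
  "gen_saa_accepts n I F T part ws \<longleftrightarrow> length ws = n \<and>
     (\<exists>q0\<in>I. \<exists>qf\<in>F. (gen_saa_step n T part ws)\<^sup>*\<^sup>* (q0, replicate n 0)
                                                  (qf, map (\<lambda>w. Suc (length w)) ws))"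

fun gen_faa_step ::
  "nat \<Rightarrow> 'q set \<Rightarrow> ('q \<Rightarrow> 'a option list \<Rightarrow> 'q set \<times> nat set set) \<Rightarrow> 'a list list \<Rightarrow>
    'q \<times> nat list \<Rightarrow> 'q \<times> nat list \<Rightarrow> bool" where
  "gen_faa_step n Q \<delta> ws (s, p) (t, p') \<longleftrightarrow>
     s \<in> Q \<and> cur_sym ws p \<in> padded_alphabet n \<and>
     (\<exists>\<chi>\<in>snd (\<delta> s (cur_sym ws p)). t \<in> fst (\<delta> s (cur_sym ws p)) \<and> p' = advance \<chi> p)"

definition gen_faa_accepts ::
  "nat \<Rightarrow> 'q set \<Rightarrow> 'q set \<Rightarrow> 'q set \<Rightarrow> ('q \<Rightarrow> 'a option list \<Rightarrow> 'q set \<times> nat set set) \<Rightarrow>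
    'a list list \<Rightarrow> bool" where
  "gen_faa_accepts n Q I F \<delta> ws \<longleftrightarrow> length ws = n \<and>
     (\<exists>s0\<in>I. \<exists>sf\<in>F. (gen_faa_step n Q \<delta> ws)\<^sup>*\<^sup>* (s0, replicate n 0) (sf, map length ws))"

lemma saa_step_eq_gen: "saa_step n M ws = gen_saa_step n (q_trans M) (q_part M) ws"
  by (simp add: fun_eq_iff split_paired_all saa_step_def Let_def)

lemma saa_lang_eq_gen:
  "saa_lang n M = {ws. gen_saa_accepts n (q_init M) (q_final M) (q_trans M) (q_part M) ws}"
  by (simp add: saa_lang_def saa_accepts_def gen_saa_accepts_def saa_step_eq_gen)

lemma faa_step_eq_gen: "faa_step n M ws = gen_faa_step n (f_states M) (f_delta M) ws"
  by (simp add: fun_eq_iff split_paired_all faa_step_def Let_def)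

lemma faa_lang_eq_gen:
  "faa_lang n M = {ws. gen_faa_accepts n (f_states M) (f_init M) (f_final M) (f_delta M) ws}"
  by (simp add: faa_lang_def faa_accepts_def gen_faa_accepts_def faa_step_eq_gen)

lemma ex_saa_eq_gen_saa:
  assumes "finite Q" and "I \<subseteq> Q" and "F \<subseteq> Q"
    and closed: "\<forall>(q, a, q')\<in>T. q \<in> Q \<and> q' \<in> Q" and part: "\<forall>q\<in>Q. part q < n"
  shows "\<exists>M::'a saa. saa_wf n M \<and> saa_lang n M = {ws. gen_saa_accepts n I F T part ws}"
proof -
  obtain f :: "_ \<Rightarrow> nat" where inj: "inj_on f Q"
    using finite_imp_inj_to_nat_seg[OF \<open>finite Q\<close>] by blast
  define M :: "'a saa" where "M =
    \<lparr>q_states = f ` Q, q_init = f ` I, q_final = f ` F,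
     q_trans = (\<lambda>(q, a, q'). (f q, a, f q')) ` T, q_part = part \<circ> inv_into Q f\<rparr>"
  have "saa_wf n M"
    using assms inj unfolding M_def saa_wf_def by auto
  moreover
  have trans: "(f q, a, x) \<in> q_trans M \<longleftrightarrow> (\<exists>q'. x = f q' \<and> (q, a, q') \<in> T)" if "q \<in> Q" for q a x
    using that closed inj unfolding M_def by (auto dest: inj_onD intro: rev_image_eqI)
  have part_f: "q_part M (f q) = part q" if "q \<in> Q" for q
    using that inj unfolding M_def by simp
  have "(gen_saa_step n (q_trans M) (q_part M) ws)\<^sup>*\<^sup>* (f q0, p0) (f qf, pf) \<longleftrightarrow>
        (gen_saa_step n T part ws)\<^sup>*\<^sup>* (q0, p0) (qf, pf)"
    if "q0 \<in> Q" "qf \<in> Q" for ws q0 qf p0 pf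
    using inj _ _ that
  proof (rule rtranclp_rename_states_iff)
    show "q' \<in> Q \<and> gen_saa_step n (q_trans M) (q_part M) ws (f q, p) (f q', p')"
      if "q \<in> Q" "gen_saa_step n T part ws (q, p) (q', p')" for q p q' p'
      using that closed trans part_f by fastforce
    show "\<exists>q' p'. y = (f q', p') \<and> q' \<in> Q \<and> gen_saa_step n T part ws (q, p) (q', p')"
      if "q \<in> Q" "gen_saa_step n (q_trans M) (q_part M) ws (f q, p) y" for q p y
      using that closed trans part_f by (cases y) fastforce
  qed
  then have "gen_saa_accepts n (q_init M) (q_final M) (q_trans M) (q_part M) ws \<longleftrightarrow>
             gen_saa_accepts n I F T part ws" for ws
    using \<open>I \<subseteq> Q\<close> \<open>F \<subseteq> Q\<close> unfolding gen_saa_accepts_def by (simp add: M_def) blast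
  ultimately show ?thesis
    by (auto simp: saa_lang_eq_gen)
qed


lemma ex_dfaa_eq_gen_faa:
  fixes \<delta> :: "'q \<Rightarrow> 'a option list \<Rightarrow> 'q set \<times> nat set set"
  assumes "finite Q" and "I \<subseteq> Q" and "F \<subseteq> Q"
    and targets: "\<And>s \<sigma>. s \<in> Q \<Longrightarrow> \<sigma> \<in> padded_alphabet n \<Longrightarrow> fst (\<delta> s \<sigma>) \<subseteq> Q"
    and filters: "\<And>s \<sigma>. s \<in> Q \<Longrightarrow> \<sigma> \<in> padded_alphabet n \<Longrightarrow> snd (\<delta> s \<sigma>) \<subseteq> filters n"
    and dollar: "\<And>s \<sigma> i \<chi>. s \<in> Q \<Longrightarrow> \<sigma> \<in> padded_alphabet n \<Longrightarrow> i < n \<Longrightarrow> \<sigma> ! i = None \<Longrightarrow>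
                   fst (\<delta> s \<sigma>) \<noteq> {} \<Longrightarrow> \<chi> \<in> snd (\<delta> s \<sigma>) \<Longrightarrow> i \<notin> \<chi>"
    and deterministic: "\<And>s \<sigma>. s \<in> Q \<Longrightarrow> \<sigma> \<in> padded_alphabet n \<Longrightarrow> card (snd (\<delta> s \<sigma>)) \<le> 1"
  shows "\<exists>M::'a faa. is_dfaa n M \<and> faa_lang n M = {ws. gen_faa_accepts n Q I F \<delta> ws}"
proof -
  obtain f :: "_ \<Rightarrow> nat" where inj: "inj_on f Q"
    using finite_imp_inj_to_nat_seg[OF \<open>finite Q\<close>] by blast
  define M :: "'a faa" where "M =
    \<lparr>f_states = f ` Q, f_init = f ` I, f_final = f ` F,
     f_delta = (\<lambda>x \<sigma>. if x \<in> f ` Q then (f ` fst (\<delta> (inv_into Q f x) \<sigma>), snd (\<delta> (inv_into Q f x) \<sigma>))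
                      else ({}, {}))\<rparr>"
  have delta_f: "f_delta M (f q) \<sigma> = (f ` fst (\<delta> q \<sigma>), snd (\<delta> q \<sigma>))" if "q \<in> Q" for q \<sigma>
    using that inj unfolding M_def by simp
  have states: "f_states M = f ` Q"
    unfolding M_def by simp
  have "is_dfaa n M"
    unfolding is_dfaa_def faa_wf_def states
    using assms inj by (auto simp: M_def image_subset_iff) blast
  moreover
  have "(gen_faa_step n (f_states M) (f_delta M) ws)\<^sup>*\<^sup>* (f q0, p0) (f qf, pf) \<longleftrightarrow>
        (gen_faa_step n Q \<delta> ws)\<^sup>*\<^sup>* (q0, p0) (qf, pf)"
    if "q0 \<in> Q" "qf \<in> Q" for ws q0 qf p0 pf
    using inj _ _ that
  proof (rule rtranclp_rename_states_iff)
    show "q' \<in> Q \<and> gen_faa_step n (f_states M) (f_delta M) ws (f q, p) (f q', p')"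
      if "q \<in> Q" "gen_faa_step n Q \<delta> ws (q, p) (q', p')" for q p q' p'
      using that targets delta_f states by fastforce
    show "\<exists>q' p'. y = (f q', p') \<and> q' \<in> Q \<and> gen_faa_step n Q \<delta> ws (q, p) (q', p')"
      if "q \<in> Q" "gen_faa_step n (f_states M) (f_delta M) ws (f q, p) y" for q p y
      using that targets delta_f states by (cases y) fastforce
  qed
  then have "gen_faa_accepts n (f_states M) (f_init M) (f_final M) (f_delta M) ws \<longleftrightarrow>
             gen_faa_accepts n Q I F \<delta> ws" for ws
    using \<open>I \<subseteq> Q\<close> \<open>F \<subseteq> Q\<close> unfolding gen_faa_accepts_def by (simp add: M_def) blast
  ultimately show ?thesis
    by (auto simp: faa_lang_eq_gen)
qed

section \<open>From FAA to SAA\<close>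

lemma faa_wf_delta:
  assumes "faa_wf n M" and "s \<in> f_states M" and "\<sigma> \<in> padded_alphabet n"
  shows faa_wf_targets: "fst (f_delta M s \<sigma>) \<subseteq> f_states M"
    and faa_wf_filters: "\<chi> \<in> snd (f_delta M s \<sigma>) \<Longrightarrow> finite \<chi> \<and> \<chi> \<subseteq> {..<n}"
    and faa_wf_dollar: "\<lbrakk>i < n; \<sigma> ! i = None; t \<in> fst (f_delta M s \<sigma>); \<chi> \<in> snd (f_delta M s \<sigma>)\<rbrakk>
                        \<Longrightarrow> i \<notin> \<chi>"
proof -
  have "fst (f_delta M s \<sigma>) \<subseteq> f_states M \<and> snd (f_delta M s \<sigma>) \<subseteq> filters n \<and>
       (\<forall>i<n. \<sigma> ! i = None \<and> fst (f_delta M s \<sigma>) \<noteq> {} \<longrightarrow> (\<forall>\<chi>\<in>snd (f_delta M s \<sigma>). i \<notin> \<chi>))"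
    using assms unfolding faa_wf_def by simp
  then show "fst (f_delta M s \<sigma>) \<subseteq> f_states M"
    and "\<chi> \<in> snd (f_delta M s \<sigma>) \<Longrightarrow> finite \<chi> \<and> \<chi> \<subseteq> {..<n}"
    and "\<lbrakk>i < n; \<sigma> ! i = None; t \<in> fst (f_delta M s \<sigma>); \<chi> \<in> snd (f_delta M s \<sigma>)\<rbrakk> \<Longrightarrow> i \<notin> \<chi>"
    by (auto simp: filters_def intro: finite_subset)
qed

lemma faa_wf_init_final:
  "faa_wf n M \<Longrightarrow> f_init M \<subseteq> f_states M \<and> f_final M \<subseteq> f_states M"
  by (simp add: faa_wf_def)

text \<open>\<open>Load k b\<close>: the buffer b holds the first symbols of the tapes below k.
  \<open>Main s b\<close>: the FAA is in state s and b holds the symbols under its heads.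
  \<open>Refill t b is\<close>: the FAA moves to t; the buffer entries of the tapes in \<open>is\<close> are stale.\<close>

datatype 'a lookahead_state =
    Load nat "'a option list"
  | Main nat "'a option list"
  | Refill nat "'a option list" "nat list"

text \<open>States without letter moves are put on tape 0, which requires \<open>n \<ge> 1\<close>.\<close>

fun lookahead_part :: "nat \<Rightarrow> 'a lookahead_state \<Rightarrow> nat" where
  "lookahead_part n (Load k b) = (if k < n then k else 0)"
| "lookahead_part n (Refill t b (i # is)) = i"
| "lookahead_part n _ = 0"

inductive_set lookahead_trans ::
  "nat \<Rightarrow> 'a faa \<Rightarrow> ('a lookahead_state \<times> 'a option option \<times> 'a lookahead_state) set"
  for n :: nat and M :: "'a faa" where
  load: "k < n \<Longrightarrow> length b = k \<Longrightarrow> (Load k b, Some a, Load (Suc k) (b @ [a])) \<in> lookahead_trans n M"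
| start: "length b = n \<Longrightarrow> s \<in> f_init M \<Longrightarrow> (Load n b, None, Main s b) \<in> lookahead_trans n M"
| choose: "s \<in> f_states M \<Longrightarrow> b \<in> padded_alphabet n \<Longrightarrow> \<chi> \<in> snd (f_delta M s b) \<Longrightarrow>
    t \<in> fst (f_delta M s b) \<Longrightarrow> (Main s b, None, Refill t b (sorted_list_of_set \<chi>)) \<in> lookahead_trans n M"
| refill: "t \<in> f_states M \<Longrightarrow> length b = n \<Longrightarrow> i < n \<Longrightarrow> set is \<subseteq> {..<n} \<Longrightarrow> length is < n \<Longrightarrow>
    (Refill t b (i # is), Some a, Refill t (b[i := a]) is) \<in> lookahead_trans n M"
| resume: "t \<in> f_states M \<Longrightarrow> length b = n \<Longrightarrow> (Refill t b [], None, Main t b) \<in> lookahead_trans n M"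

fun lookahead_valid :: "nat \<Rightarrow> 'a faa \<Rightarrow> 'a lookahead_state \<Rightarrow> bool" where
  "lookahead_valid n M (Load k b) \<longleftrightarrow> k \<le> n \<and> length b = k"
| "lookahead_valid n M (Main s b) \<longleftrightarrow> s \<in> f_states M \<and> length b = n"
| "lookahead_valid n M (Refill t b is) \<longleftrightarrow>
     t \<in> f_states M \<and> length b = n \<and> set is \<subseteq> {..<n} \<and> length is \<le> n"

definition lookahead_final :: "nat \<Rightarrow> 'a faa \<Rightarrow> 'a lookahead_state set" where
  "lookahead_final n M = {Main s b | s b. s \<in> f_final M \<and> length b = n}"

abbreviation lookahead_accepts :: "nat \<Rightarrow> 'a faa \<Rightarrow> 'a list list \<Rightarrow> bool" where
  "lookahead_accepts n M \<equiv>
     gen_saa_accepts n {Load 0 []} (lookahead_final n M) (lookahead_trans n M) (lookahead_part n)"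

lemma lookahead_trans_simps:
  "(Load k b, Some a, q') \<in> lookahead_trans n M \<longleftrightarrow>
     k < n \<and> length b = k \<and> q' = Load (Suc k) (b @ [a])"
  "(Load k b, None, q') \<in> lookahead_trans n M \<longleftrightarrow>
     k = n \<and> length b = n \<and> (\<exists>s\<in>f_init M. q' = Main s b)"
  "(Main s b, Some a, q') \<notin> lookahead_trans n M"
  "(Main s b, None, q') \<in> lookahead_trans n M \<longleftrightarrow>
     s \<in> f_states M \<and> b \<in> padded_alphabet n \<and>
     (\<exists>\<chi> t. \<chi> \<in> snd (f_delta M s b) \<and> t \<in> fst (f_delta M s b) \<and>
            q' = Refill t b (sorted_list_of_set \<chi>))"
  "(Refill t b is, Some a, q') \<in> lookahead_trans n M \<longleftrightarrow>
     (\<exists>i is'. is = i # is' \<and> t \<in> f_states M \<and> length b = n \<and> i < n \<and> set is' \<subseteq> {..<n} \<and>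
              length is' < n \<and> q' = Refill t (b[i := a]) is')"
  "(Refill t b is, None, q') \<in> lookahead_trans n M \<longleftrightarrow>
     is = [] \<and> t \<in> f_states M \<and> length b = n \<and> q' = Main t b"
  by (auto elim!: lookahead_trans.cases intro: lookahead_trans.intros)

lemma finite_lookahead_valid:
  assumes "finite (f_states M)"
  shows "finite (Collect (lookahead_valid n (M :: ('a::finite) faa)))"
proof -
  let ?B = "{b :: 'a option list. length b \<le> n}"
    and ?I = "{is. set is \<subseteq> {..<n} \<and> length is \<le> n}"
  have "finite ?B"
    using finite_lists_length_le[OF finite_UNIV, of n] by simp
  moreover have "finite ?I"
    by (simp add: finite_lists_length_le)
  ultimately have cover_finite: "finite (case_prod Load ` ({..n} \<times> ?B) \<union> case_prod Main ` (f_states M \<times> ?B) \<union>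
      (\<lambda>(t, b, is). Refill t b is) ` (f_states M \<times> ?B \<times> ?I))"
    using assms by (simp add: finite_cartesian_product)
  have cover: "Collect (lookahead_valid n M) \<subseteq>
      case_prod Load ` ({..n} \<times> ?B) \<union> case_prod Main ` (f_states M \<times> ?B) \<union>
      (\<lambda>(t, b, is). Refill t b is) ` (f_states M \<times> ?B \<times> ?I)"
  proof
    fix q assume q: "q \<in> Collect (lookahead_valid n M)"
    show "q \<in> case_prod Load ` ({..n} \<times> ?B) \<union> case_prod Main ` (f_states M \<times> ?B) \<union>
      (\<lambda>(t, b, is). Refill t b is) ` (f_states M \<times> ?B \<times> ?I)"
    proof (cases q)
      case (Load k b)
      with q show ?thesis by (intro UnI1 rev_image_eqI[of "(k, b)"]) auto
    next
      case (Main s b)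
      with q show ?thesis by (intro UnI1 UnI2 rev_image_eqI[of "(s, b)"]) auto
    next
      case (Refill t b "is")
      with q show ?thesis by (intro UnI2 rev_image_eqI[of "(t, b, is)"]) auto
    qed
  qed
  show ?thesis
    using finite_subset[OF cover cover_finite] .
qed

lemma length_sorted_list_of_subset_lessThan:
  "\<chi> \<subseteq> {..<n} \<Longrightarrow> length (sorted_list_of_set \<chi>) \<le> n"
  using card_mono[OF finite_lessThan, of \<chi> n] by simp

lemma lookahead_trans_valid:
  assumes wf: "faa_wf n M" and "(q, a, q') \<in> lookahead_trans n M"
  shows "lookahead_valid n M q \<and> lookahead_valid n M q'"
  using assms(2)
proof cases
  case (start b s)
  then show ?thesis
    using faa_wf_init_final[OF wf] by auto
next
  case (choose s b \<chi> t)
  then have "finite \<chi> \<and> \<chi> \<subseteq> {..<n}" "t \<in> f_states M"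
    using faa_wf_filters[OF wf, of s b \<chi>] faa_wf_targets[OF wf, of s b] by auto
  then show ?thesis
    using choose length_sorted_list_of_subset_lessThan[of \<chi> n]
    by (simp add: padded_alphabet_def)
qed auto

context
  fixes n :: nat and M :: "'a faa" and ws :: "'a list list"
  assumes wf: "faa_wf n M" and length_ws: "length ws = n"
begin

abbreviation lookahead_step ::
  "'a lookahead_state \<times> nat list \<Rightarrow> 'a lookahead_state \<times> nat list \<Rightarrow> bool" where
  "lookahead_step \<equiv> gen_saa_step n (lookahead_trans n M) (lookahead_part n) ws"

lemma enabled_filter_unfinished:
  assumes "s \<in> f_states M" and "cur_sym ws p \<in> padded_alphabet n"
    and "\<chi> \<in> snd (f_delta M s (cur_sym ws p))" and "t \<in> fst (f_delta M s (cur_sym ws p))"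
    and "i \<in> \<chi>"
  shows "i < n \<and> p ! i < length (ws ! i)"
proof -
  have "i < n"
    using faa_wf_filters[OF wf assms(1-3)] assms(5) by blast
  moreover have "cur_sym ws p ! i \<noteq> None"
    using faa_wf_dollar[OF wf assms(1,2) \<open>i < n\<close> _ assms(4,3)] assms(5) by blast
  ultimately show ?thesis
    using length_ws by (auto split: if_splits)
qed

lemma lookahead_load_run:
  "k \<le> n \<Longrightarrow> lookahead_step\<^sup>*\<^sup>* (Load 0 [], replicate n 0)
     (Load k (take k (cur_sym ws (replicate n 0))), advance {..<k} (replicate n 0))"
proof (induction k)
  case 0
  then show ?case by simp
next
  case (Suc k)
  let ?\<sigma> = "cur_sym ws (replicate n 0)" and ?P = "advance {..<k} (replicate n 0)"
  have k: "k < n"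
    using Suc.prems by simp
  have "take (Suc k) ?\<sigma> = take k ?\<sigma> @ [?\<sigma> ! k]"
    using k length_ws by (simp add: take_Suc_conv_app_nth)
  moreover have "advance {..<Suc k} (replicate n 0) = ?P[k := Suc (?P ! k)]"
    using k by (simp add: lessThan_Suc advance_insert)
  ultimately have "lookahead_step (Load k (take k ?\<sigma>), ?P)
      (Load (Suc k) (take (Suc k) ?\<sigma>), advance {..<Suc k} (replicate n 0))"
    using k length_ws by (simp add: lookahead_trans_simps)
  with Suc show ?case
    by (meson Suc_leD rtranclp.rtrancl_into_rtrancl)
qed

lemma lookahead_refill_run:
  assumes "distinct is" and "set is \<inter> D = {}" and "\<forall>i\<in>set is \<union> D. i < n \<and> p ! i < length (ws ! i)"
    and "length p = n" and "t \<in> f_states M"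
  shows "lookahead_step\<^sup>*\<^sup>* (Refill t (cur_sym ws (advance D p)) is, map Suc (advance D p))
           (Refill t (cur_sym ws (advance (D \<union> set is) p)) [], map Suc (advance (D \<union> set is) p))"
  using assms
proof (induction "is" arbitrary: D)
  case Nil
  then show ?case by simp
next
  case (Cons i "is")
  have i: "i < n" "p ! i < length (ws ! i)" "i \<notin> D"
    using Cons.prems by auto
  have "length (i # is) \<le> n"
    using Cons.prems(1,3) card_mono[OF finite_lessThan, of "set (i # is)" n]
    by (auto simp: distinct_card[symmetric])
  moreover have "(cur_sym ws (advance D p))[i := cur_sym ws (advance (insert i D) p) ! i] =
                 cur_sym ws (advance (insert i D) p)"
    using i length_ws Cons.prems(4) by (intro nth_equalityI) (auto simp: nth_list_update)
  moreover have "(map Suc (advance D p))[i := Suc (Suc (p ! i))] = map Suc (advance (insert i D) p)"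
    using i Cons.prems(4) by (intro nth_equalityI) (auto simp: nth_list_update)
  ultimately have step: "lookahead_step (Refill t (cur_sym ws (advance D p)) (i # is), map Suc (advance D p))
      (Refill t (cur_sym ws (advance (insert i D) p)) is, map Suc (advance (insert i D) p))"
    using i Cons.prems length_ws by (auto simp: lookahead_trans_simps)
  moreover have "lookahead_step\<^sup>*\<^sup>* (Refill t (cur_sym ws (advance (insert i D) p)) is, map Suc (advance (insert i D) p))
      (Refill t (cur_sym ws (advance (insert i D \<union> set is) p)) [], map Suc (advance (insert i D \<union> set is) p))"
    using Cons.prems by (intro Cons.IH) auto
  moreover have "D \<union> set (i # is) = insert i D \<union> set is"
    by auto
  ultimately show ?case
    using converse_rtranclp_into_rtranclp[of lookahead_step, OF step] by simp
qed

lemma lookahead_run_of_faa_run: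
  "(faa_step n M ws)\<^sup>*\<^sup>* (s0, replicate n 0) (s, p) \<Longrightarrow>
   lookahead_step\<^sup>*\<^sup>* (Main s0 (cur_sym ws (replicate n 0)), map Suc (replicate n 0))
                     (Main s (cur_sym ws p), map Suc p) \<and> length p = n"
proof (induction rule: rtranclp_induct2)
  case refl
  then show ?case by simp
next
  case (step s p t p')
  then have IH: "lookahead_step\<^sup>*\<^sup>* (Main s0 (cur_sym ws (replicate n 0)), map Suc (replicate n 0))
                   (Main s (cur_sym ws p), map Suc p)"
    and "length p = n"
    by auto
  from step.hyps(2) obtain \<chi> where move: "s \<in> f_states M" "cur_sym ws p \<in> padded_alphabet n"
    "\<chi> \<in> snd (f_delta M s (cur_sym ws p))" "t \<in> fst (f_delta M s (cur_sym ws p))" "p' = advance \<chi> p"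
    by (auto simp: faa_step_def Let_def)
  have "t \<in> f_states M"
    using faa_wf_targets[OF wf move(1,2)] move(4) by blast
  have "finite \<chi>"
    using faa_wf_filters[OF wf move(1-3)] by blast
  have choose: "lookahead_step (Main s (cur_sym ws p), map Suc p)
                       (Refill t (cur_sym ws p) (sorted_list_of_set \<chi>), map Suc p)"
    using move by (auto simp: lookahead_trans_simps)
  have refill: "lookahead_step\<^sup>*\<^sup>* (Refill t (cur_sym ws p) (sorted_list_of_set \<chi>), map Suc p)
      (Refill t (cur_sym ws p') [], map Suc p')"
    using lookahead_refill_run[of "sorted_list_of_set \<chi>" "{}" p t] enabled_filter_unfinished[OF move(1-4)]
      \<open>finite \<chi>\<close> \<open>length p = n\<close> \<open>t \<in> f_states M\<close> move(5)
    by auto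
  have resume: "lookahead_step (Refill t (cur_sym ws p') [], map Suc p') (Main t (cur_sym ws p'), map Suc p')"
    using \<open>t \<in> f_states M\<close> length_ws by (auto simp: lookahead_trans_simps)
  have "lookahead_step\<^sup>*\<^sup>* (Main s (cur_sym ws p), map Suc p) (Main t (cur_sym ws p'), map Suc p')"
    using converse_rtranclp_into_rtranclp[OF choose rtranclp.rtrancl_into_rtrancl[OF refill resume]] .
  then show ?case
    using rtranclp_trans[OF IH] \<open>length p = n\<close> move(5) by simp
qed

abbreviation faa_reachable :: "nat \<Rightarrow> nat list \<Rightarrow> bool" where
  "faa_reachable s p \<equiv> \<exists>s0\<in>f_init M. (faa_step n M ws)\<^sup>*\<^sup>* (s0, replicate n 0) (s, p)"

fun lookahead_inv :: "'a lookahead_state \<Rightarrow> nat list \<Rightarrow> bool" where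
  "lookahead_inv (Load k b) P \<longleftrightarrow>
     k \<le> n \<and> b = take k (cur_sym ws (replicate n 0)) \<and> P = advance {..<k} (replicate n 0)"
| "lookahead_inv (Main s b) P \<longleftrightarrow>
     (\<exists>p. length p = n \<and> faa_reachable s p \<and> b = cur_sym ws p \<and> P = map Suc p)"
| "lookahead_inv (Refill t b is) P \<longleftrightarrow>
     (\<exists>p s \<chi>. length p = n \<and> faa_reachable s p \<and> s \<in> f_states M \<and>
        cur_sym ws p \<in> padded_alphabet n \<and> \<chi> \<in> snd (f_delta M s (cur_sym ws p)) \<and>
        t \<in> fst (f_delta M s (cur_sym ws p)) \<and> distinct is \<and> set is \<subseteq> \<chi> \<and>
        b = cur_sym ws (advance (\<chi> - set is) p) \<and> P = map Suc (advance (\<chi> - set is) p))"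

lemma lookahead_inv_step_Load:
  assumes inv: "lookahead_inv (Load k b) P" and step: "lookahead_step (Load k b, P) (q', P')"
  shows "lookahead_inv q' P'"
proof -
  let ?\<sigma> = "cur_sym ws (replicate n 0)"
  have b: "b = take k ?\<sigma>" and P: "P = advance {..<k} (replicate n 0)"
    using inv by auto
  from step show ?thesis
    unfolding gen_saa_step.simps
  proof (elim disjE exE conjE)
    assume "(Load k b, None, q') \<in> lookahead_trans n M" "P' = P"
    then obtain s where "k = n" "s \<in> f_init M" "q' = Main s b"
      by (auto simp: lookahead_trans_simps)
    then show ?thesis
      using b P \<open>P' = P\<close> length_ws by (auto simp: advance_lessThan intro!: exI[of _ "replicate n 0"])
  next
    fix a
    let ?i = "lookahead_part n (Load k b)"
    assume "(Load k b, Some a, q') \<in> lookahead_trans n M"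
      and a: "a = (if P ! ?i < length (ws ! ?i) then Some (ws ! ?i ! (P ! ?i)) else None)"
      and P': "P' = P[?i := Suc (P ! ?i)]"
    then have "k < n" and q': "q' = Load (Suc k) (b @ [a])"
      by (auto simp: lookahead_trans_simps)
    then have "a = ?\<sigma> ! k"
      using a P length_ws by simp
    then have "b @ [a] = take (Suc k) ?\<sigma>"
      using b \<open>k < n\<close> length_ws by (simp add: take_Suc_conv_app_nth)
    moreover have "P' = advance {..<Suc k} (replicate n 0)"
      using P' P \<open>k < n\<close> by (simp add: lessThan_Suc advance_insert)
    ultimately show ?thesis
      using q' \<open>k < n\<close> by simp
  qed
qed

lemma lookahead_inv_step_Main:
  assumes inv: "lookahead_inv (Main s b) P" and step: "lookahead_step (Main s b, P) (q', P')"
  shows "lookahead_inv q' P'"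
proof -
  obtain p where p: "length p = n" "faa_reachable s p" "b = cur_sym ws p" "P = map Suc p"
    using inv by auto
  from step obtain \<chi> t where move: "s \<in> f_states M" "b \<in> padded_alphabet n"
    "\<chi> \<in> snd (f_delta M s b)" "t \<in> fst (f_delta M s b)"
    and q': "q' = Refill t b (sorted_list_of_set \<chi>)" and "P' = P"
    by (auto simp: lookahead_trans_simps)
  have "finite \<chi>"
    using faa_wf_filters[OF wf move(1-3)] by blast
  then show ?thesis
    unfolding q' lookahead_inv.simps using p move \<open>P' = P\<close>
    by (intro exI[of _ p] exI[of _ s] exI[of _ \<chi>]) auto
qed

lemma lookahead_inv_step_Refill:
  assumes inv: "lookahead_inv (Refill t b is) P" and step: "lookahead_step (Refill t b is, P) (q', P')"
  shows "lookahead_inv q' P'"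
proof -
  obtain p s \<chi> where p: "length p = n" "faa_reachable s p" "s \<in> f_states M"
    "cur_sym ws p \<in> padded_alphabet n" "\<chi> \<in> snd (f_delta M s (cur_sym ws p))"
    "t \<in> fst (f_delta M s (cur_sym ws p))" "distinct is" "set is \<subseteq> \<chi>"
    and b: "b = cur_sym ws (advance (\<chi> - set is) p)" and P: "P = map Suc (advance (\<chi> - set is) p)"
    using inv by auto
  from step show ?thesis
    unfolding gen_saa_step.simps
  proof (elim disjE exE conjE)
    assume "(Refill t b is, None, q') \<in> lookahead_trans n M" "P' = P"
    then have "is = []" "q' = Main t b"
      by (auto simp: lookahead_trans_simps)
    moreover have "faa_step n M ws (s, p) (t, advance \<chi> p)"
      using p by (auto simp: faa_step_def Let_def)
    then have "faa_reachable t (advance \<chi> p)"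
      using p(2) by (blast intro: rtranclp.rtrancl_into_rtrancl)
    ultimately show ?thesis
      using p(1) b P \<open>P' = P\<close> by auto
  next
    fix a
    let ?i = "lookahead_part n (Refill t b is)"
    assume "(Refill t b is, Some a, q') \<in> lookahead_trans n M"
      and a: "a = (if P ! ?i < length (ws ! ?i) then Some (ws ! ?i ! (P ! ?i)) else None)"
      and P': "P' = P[?i := Suc (P ! ?i)]"
    then obtain i is' where "is = i # is'" "i < n" and q': "q' = Refill t (b[i := a]) is'"
      by (auto simp: lookahead_trans_simps)
    define D where "D = \<chi> - set is"
    have "i \<notin> D" "\<chi> - set is' = insert i D"
      using \<open>is = i # is'\<close> p(7,8) unfolding D_def by auto
    have Pi: "P ! i = Suc (p ! i)"
      using P p(1) \<open>i < n\<close> \<open>i \<notin> D\<close> unfolding D_def by simp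
    have "b[i := a] = cur_sym ws (advance (insert i D) p)"
      using a Pi b \<open>is = i # is'\<close> \<open>i < n\<close> \<open>i \<notin> D\<close> p(1) length_ws
      by (intro nth_equalityI) (auto simp: nth_list_update D_def)
    moreover have "P' = map Suc (advance (insert i D) p)"
      using P' Pi P \<open>is = i # is'\<close> \<open>i < n\<close> \<open>i \<notin> D\<close> p(1)
      by (intro nth_equalityI) (auto simp: nth_list_update D_def)
    ultimately show ?thesis
      unfolding q' using p \<open>is = i # is'\<close> \<open>\<chi> - set is' = insert i D\<close>
      by (intro lookahead_inv.simps(3)[THEN iffD2] exI[of _ p] exI[of _ s] exI[of _ \<chi>]) auto
  qed
qed

lemma lookahead_inv_reachable:
  assumes "lookahead_step\<^sup>*\<^sup>* (Load 0 [], replicate n 0) (q, P)"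
  shows "lookahead_inv q P"
  using assms
proof (induction rule: rtranclp_induct2)
  case refl
  then show ?case by simp
next
  case (step q P q' P')
  then show ?case
    by (cases q) (blast intro: lookahead_inv_step_Load lookahead_inv_step_Main lookahead_inv_step_Refill)+
qed

lemma lookahead_accepts_iff:
  "lookahead_accepts n M ws \<longleftrightarrow> faa_accepts n M ws"
proof
  assume "lookahead_accepts n M ws"
  then obtain sf b where "sf \<in> f_final M"
    and "lookahead_step\<^sup>*\<^sup>* (Load 0 [], replicate n 0) (Main sf b, map (\<lambda>w. Suc (length w)) ws)"
    unfolding gen_saa_accepts_def lookahead_final_def by blast
  then obtain p where "faa_reachable sf p" "map (\<lambda>w. Suc (length w)) ws = map Suc p"
    using lookahead_inv_reachable by fastforce
  moreover from this(2) have "map Suc (map length ws) = map Suc p"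
    by (simp add: comp_def)
  then have "p = map length ws"
    by (metis inj_Suc inj_map_eq_map)
  ultimately show "faa_accepts n M ws"
    unfolding faa_accepts_def using length_ws \<open>sf \<in> f_final M\<close> by blast
next
  assume "faa_accepts n M ws"
  then obtain s0 sf where "s0 \<in> f_init M" "sf \<in> f_final M"
    and run: "(faa_step n M ws)\<^sup>*\<^sup>* (s0, replicate n 0) (sf, map length ws)"
    unfolding faa_accepts_def by blast
  let ?\<sigma> = "cur_sym ws (replicate n 0)"
  have "lookahead_step\<^sup>*\<^sup>* (Load 0 [], replicate n 0) (Load n ?\<sigma>, map Suc (replicate n 0))"
    using lookahead_load_run[of n] length_ws by (simp add: advance_lessThan)
  moreover have "lookahead_step (Load n ?\<sigma>, map Suc (replicate n 0)) (Main s0 ?\<sigma>, map Suc (replicate n 0))"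
    using \<open>s0 \<in> f_init M\<close> length_ws by (simp add: lookahead_trans_simps)
  moreover have "lookahead_step\<^sup>*\<^sup>* (Main s0 ?\<sigma>, map Suc (replicate n 0))
      (Main sf (cur_sym ws (map length ws)), map (\<lambda>w. Suc (length w)) ws)"
    using lookahead_run_of_faa_run[OF run] by (simp add: comp_def)
  ultimately have "lookahead_step\<^sup>*\<^sup>* (Load 0 [], replicate n 0)
      (Main sf (cur_sym ws (map length ws)), map (\<lambda>w. Suc (length w)) ws)"
    by (meson rtranclp.rtrancl_into_rtrancl rtranclp_trans)
  moreover have "Main sf (cur_sym ws (map length ws)) \<in> lookahead_final n M"
    using \<open>sf \<in> f_final M\<close> length_ws by (simp add: lookahead_final_def)
  ultimately show "lookahead_accepts n M ws"
    unfolding gen_saa_accepts_def using length_ws by blast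
qed

end

lemma faa_to_saa:
  fixes M :: "('a::finite) faa"
  assumes wf: "faa_wf n M" and "n \<ge> 1"
  shows "\<exists>M'::'a saa. saa_wf n M' \<and> saa_lang n M' = faa_lang n M"
proof -
  have "\<exists>M'::'a saa. saa_wf n M' \<and> saa_lang n M' = {ws. lookahead_accepts n M ws}"
  proof (rule ex_saa_eq_gen_saa)
    show "finite (Collect (lookahead_valid n M))"
      using wf by (intro finite_lookahead_valid) (simp add: faa_wf_def)
    show "{Load 0 []} \<subseteq> Collect (lookahead_valid n M)"
      by simp
    show "lookahead_final n M \<subseteq> Collect (lookahead_valid n M)"
      using faa_wf_init_final[OF wf] by (auto simp: lookahead_final_def)
    show "\<forall>(q, a, q')\<in>lookahead_trans n M.
            q \<in> Collect (lookahead_valid n M) \<and> q' \<in> Collect (lookahead_valid n M)"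
      using lookahead_trans_valid[OF wf] by auto
    show "\<forall>q\<in>Collect (lookahead_valid n M). lookahead_part n q < n"
    proof
      fix q
      assume "q \<in> Collect (lookahead_valid n M)"
      then show "lookahead_part n q < n"
        using \<open>n \<ge> 1\<close> by (cases "(n, q)" rule: lookahead_part.cases) auto
    qed
  qed
  moreover have "lookahead_accepts n M ws \<longleftrightarrow> faa_accepts n M ws" for ws
    using lookahead_accepts_iff[OF wf]
    by (cases "length ws = n") (auto simp: gen_saa_accepts_def faa_accepts_def)
  ultimately show ?thesis
    by (simp add: faa_lang_def)
qed

section \<open>From SAA to DFAA\<close>

lemma saa_wf_trans:
  assumes "saa_wf n M" and "(q, a, q') \<in> q_trans M"
  shows "q \<in> q_states M \<and> q' \<in> q_states M"
proof -
  have "\<forall>(q, a, q')\<in>q_trans M. q \<in> q_states M \<and> q' \<in> q_states M"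
    using assms(1) by (simp add: saa_wf_def)
  then show ?thesis
    using assms(2) by blast
qed

lemma saa_wf_init_final:
  "saa_wf n M \<Longrightarrow> q_init M \<subseteq> q_states M \<and> q_final M \<subseteq> q_states M"
  by (simp add: saa_wf_def)

text \<open>Moves of the SAA that read no letter of A, while the symbols under the heads are \<sigma>:
  \<open>\<epsilon>\<close>-moves, and reads of \$ on tapes with \<open>\<sigma> ! i = None\<close>, which are recorded in D.\<close>

fun silent_step :: "nat \<Rightarrow> 'a saa \<Rightarrow> 'a option list \<Rightarrow> nat \<times> nat set \<Rightarrow> nat \<times> nat set \<Rightarrow> bool" where
  "silent_step n M \<sigma> (q, D) (q', D') \<longleftrightarrow>
     ((q, None, q') \<in> q_trans M \<and> D' = D) \<or>
     (q_part M q < n \<and> q_part M q \<notin> D \<and> \<sigma> ! q_part M q = None \<and> (q, Some None, q') \<in> q_trans M \<and>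
      D' = insert (q_part M q) D)"

text \<open>\<open>(q, D, j)\<close>: the SAA is in state q, has read \$ exactly on the tapes in D, and reads its
  next letter on tape j.\<close>

definition guess_states :: "nat \<Rightarrow> 'a saa \<Rightarrow> (nat \<times> nat set \<times> nat) set" where
  "guess_states n M = q_states M \<times> Pow {..<n} \<times> {..<n}"

fun guess_delta ::
  "nat \<Rightarrow> 'a saa \<Rightarrow> nat \<times> nat set \<times> nat \<Rightarrow> 'a option list \<Rightarrow> (nat \<times> nat set \<times> nat) set \<times> nat set set"
  where
  "guess_delta n M (q, D, j) \<sigma> =
     ({(q', D', j') | q' D' j'. j' < n \<and>
        (\<exists>q1 a. (silent_step n M \<sigma>)\<^sup>*\<^sup>* (q, D) (q1, D') \<and> q_part M q1 = j \<and> \<sigma> ! j = Some a \<and>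
               (q1, Some (Some a), q') \<in> q_trans M)},
      {{j}})"

definition guess_init :: "nat \<Rightarrow> 'a saa \<Rightarrow> (nat \<times> nat set \<times> nat) set" where
  "guess_init n M = {(q, {}, j) | q j. q \<in> q_init M \<and> j < n}"

definition guess_final :: "nat \<Rightarrow> 'a saa \<Rightarrow> (nat \<times> nat set \<times> nat) set" where
  "guess_final n M = {s \<in> guess_states n M. case s of (q, D, j) \<Rightarrow>
     \<exists>qf\<in>q_final M. (silent_step n M (replicate n None))\<^sup>*\<^sup>* (q, D) (qf, {..<n})}"

abbreviation guess_accepts :: "nat \<Rightarrow> 'a saa \<Rightarrow> 'a list list \<Rightarrow> bool" where
  "guess_accepts n M \<equiv>
     gen_faa_accepts n (guess_states n M) (guess_init n M) (guess_final n M) (guess_delta n M)"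

lemma silent_steps_subset:
  "(silent_step n M \<sigma>)\<^sup>*\<^sup>* (q, D) (q', D') \<Longrightarrow> D \<subseteq> {..<n} \<Longrightarrow> D' \<subseteq> {..<n}"
  by (induction rule: rtranclp_induct2) auto

context
  fixes n :: nat and M :: "'a saa" and ws :: "'a list list"
  assumes wf: "saa_wf n M" and length_ws: "length ws = n"
begin

abbreviation guess_step ::
  "(nat \<times> nat set \<times> nat) \<times> nat list \<Rightarrow> (nat \<times> nat set \<times> nat) \<times> nat list \<Rightarrow> bool" where
  "guess_step \<equiv> gen_faa_step n (guess_states n M) (guess_delta n M) ws"

text \<open>Positions p of an FAA, with D a set of fully read tapes; the corresponding SAA positions,
  after \$ has been read on the tapes in D, are \<open>advance D p\<close>.\<close>

definition valid_heads :: "nat set \<Rightarrow> nat list \<Rightarrow> bool" where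
  "valid_heads D p \<longleftrightarrow> length p = n \<and> D \<subseteq> {..<n} \<and>
     (\<forall>i<n. p ! i \<le> length (ws ! i)) \<and> (\<forall>i\<in>D. p ! i = length (ws ! i))"

lemma silent_steps_saa_run:
  assumes "(silent_step n M (cur_sym ws p))\<^sup>*\<^sup>* (q, D) (q', D')" and "valid_heads D p"
  shows "(saa_step n M ws)\<^sup>*\<^sup>* (q, advance D p) (q', advance D' p) \<and> valid_heads D' p"
  using assms
proof (induction rule: rtranclp_induct2)
  case refl
  then show ?case by simp
next
  case (step q1 D1 q2 D2)
  then have run: "(saa_step n M ws)\<^sup>*\<^sup>* (q, advance D p) (q1, advance D1 p)" and "valid_heads D1 p"
    by auto
  from step.hyps(2) have "saa_step n M ws (q1, advance D1 p) (q2, advance D2 p) \<and> valid_heads D2 p"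
    unfolding silent_step.simps
  proof (elim disjE conjE)
    assume "(q1, None, q2) \<in> q_trans M" "D2 = D1"
    then show ?thesis
      using \<open>valid_heads D1 p\<close> by (simp add: saa_step_eq_gen)
  next
    let ?j = "q_part M q1"
    assume "?j < n" "?j \<notin> D1" "cur_sym ws p ! ?j = None" "(q1, Some None, q2) \<in> q_trans M"
      and "D2 = insert ?j D1"
    moreover from this have "p ! ?j = length (ws ! ?j)"
      using \<open>valid_heads D1 p\<close> length_ws by (simp add: valid_heads_def not_less le_antisym split: if_splits)
    ultimately show ?thesis
      using \<open>valid_heads D1 p\<close> by (auto simp: saa_step_eq_gen valid_heads_def advance_insert)
  qed
  then show ?case
    using run by (blast intro: rtranclp.rtrancl_into_rtrancl)
qed

lemma guess_run_saa_run:
  "guess_step\<^sup>*\<^sup>* ((q0, {}, j0), replicate n 0) (s, p) \<Longrightarrow>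
   \<exists>q D j. s = (q, D, j) \<and> valid_heads D p \<and> (saa_step n M ws)\<^sup>*\<^sup>* (q0, replicate n 0) (q, advance D p)"
proof (induction rule: rtranclp_induct2)
  case refl
  then show ?case
    using length_ws by (simp add: valid_heads_def)
next
  case (step s p s' p')
  then obtain q D j where "s = (q, D, j)" "valid_heads D p"
    and run: "(saa_step n M ws)\<^sup>*\<^sup>* (q0, replicate n 0) (q, advance D p)"
    by blast
  let ?\<sigma> = "cur_sym ws p"
  from step.hyps(2) obtain q' D' j' q1 a where "s' = (q', D', j')" "p' = advance {j} p"
    and silent: "(silent_step n M ?\<sigma>)\<^sup>*\<^sup>* (q, D) (q1, D')"
    and "q_part M q1 = j" "?\<sigma> ! j = Some a" and letter: "(q1, Some (Some a), q') \<in> q_trans M"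
    and "j < n"
    unfolding \<open>s = (q, D, j)\<close> by (auto simp: guess_states_def)
  from silent_steps_saa_run[OF silent \<open>valid_heads D p\<close>]
  have "(saa_step n M ws)\<^sup>*\<^sup>* (q, advance D p) (q1, advance D' p)" and "valid_heads D' p"
    by auto
  have "p ! j < length (ws ! j)" and "a = ws ! j ! (p ! j)"
    using \<open>?\<sigma> ! j = Some a\<close> \<open>j < n\<close> length_ws by (auto split: if_splits)
  then have "j \<notin> D'"
    using \<open>valid_heads D' p\<close> by (auto simp: valid_heads_def)
  then have "saa_step n M ws (q1, advance D' p) (q', advance D' (advance {j} p))"
    using letter \<open>q_part M q1 = j\<close> \<open>j < n\<close> \<open>p ! j < length (ws ! j)\<close> \<open>a = ws ! j ! (p ! j)\<close>
      \<open>valid_heads D' p\<close>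
    by (auto simp: saa_step_eq_gen valid_heads_def advance_advance_singleton)
  moreover have "valid_heads D' (advance {j} p)"
    using \<open>valid_heads D' p\<close> \<open>j \<notin> D'\<close> \<open>p ! j < length (ws ! j)\<close> by (auto simp: valid_heads_def Suc_le_eq)
  ultimately show ?case
    using \<open>s' = (q', D', j')\<close> \<open>p' = advance {j} p\<close>
      rtranclp_trans[OF run \<open>(saa_step n M ws)\<^sup>*\<^sup>* (q, advance D p) (q1, advance D' p)\<close>]
    by (auto intro: rtranclp.rtrancl_into_rtrancl)
qed

text \<open>The SAA configuration \<open>(q, P)\<close> is reached by silent moves from a DFAA configuration
  \<open>((q1, D1, j), p)\<close> that is reachable for every guess j.\<close>

definition guess_inv :: "nat \<Rightarrow> nat \<Rightarrow> nat list \<Rightarrow> bool" where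
  "guess_inv q0 q P \<longleftrightarrow> (\<exists>q1 D1 D p. q1 \<in> q_states M \<and> D1 \<subseteq> {..<n} \<and>
     (\<forall>j<n. \<exists>j0<n. guess_step\<^sup>*\<^sup>* ((q0, {}, j0), replicate n 0) ((q1, D1, j), p)) \<and>
     (silent_step n M (cur_sym ws p))\<^sup>*\<^sup>* (q1, D1) (q, D) \<and> valid_heads D p \<and> P = advance D p)"

lemma guess_inv_letter:
  assumes "q1 \<in> q_states M" and "D1 \<subseteq> {..<n}"
    and guess: "\<forall>j<n. \<exists>j0<n. guess_step\<^sup>*\<^sup>* ((q0, {}, j0), replicate n 0) ((q1, D1, j), p)"
    and silent: "(silent_step n M (cur_sym ws p))\<^sup>*\<^sup>* (q1, D1) (q, D)" and "valid_heads D p"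
    and trans: "(q, Some (Some a), q') \<in> q_trans M" and "q_part M q = i" and "i < n" and "i \<notin> D"
    and letter: "cur_sym ws p ! i = Some a"
  shows "guess_inv q0 q' (advance D (advance {i} p))"
proof -
  have "cur_sym ws p \<noteq> replicate n None"
    using letter \<open>i < n\<close> by (metis nth_replicate option.distinct(1))
  then have "cur_sym ws p \<in> padded_alphabet n"
    using length_ws by (simp add: padded_alphabet_def)
  moreover have "(q', D, j) \<in> fst (guess_delta n M (q1, D1, i) (cur_sym ws p))" if "j < n" for j
    unfolding guess_delta.simps fst_conv using that silent trans \<open>q_part M q = i\<close> letter by blast
  ultimately have "guess_step ((q1, D1, i), p) ((q', D, j), advance {i} p)" if "j < n" for j
    using that \<open>q1 \<in> q_states M\<close> \<open>D1 \<subseteq> {..<n}\<close> \<open>i < n\<close> by (auto simp: guess_states_def)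
  then have "\<forall>j<n. \<exists>j0<n. guess_step\<^sup>*\<^sup>* ((q0, {}, j0), replicate n 0) ((q', D, j), advance {i} p)"
    using guess \<open>i < n\<close> by (blast intro: rtranclp.rtrancl_into_rtrancl)
  moreover have "p ! i < length (ws ! i)"
    using letter \<open>i < n\<close> length_ws by (simp split: if_splits)
  then have "valid_heads D (advance {i} p)"
    using \<open>valid_heads D p\<close> \<open>i \<notin> D\<close> by (auto simp: valid_heads_def Suc_le_eq)
  moreover have "q' \<in> q_states M" "D \<subseteq> {..<n}"
    using saa_wf_trans[OF wf trans] \<open>valid_heads D p\<close> by (auto simp: valid_heads_def)
  ultimately show ?thesis
    unfolding guess_inv_def by blast
qed

lemma guess_inv_step:
  assumes "guess_inv q0 q P" and "saa_step n M ws (q, P) (q', P')"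
  shows "guess_inv q0 q' P'"
proof -
  obtain q1 D1 D p where "q1 \<in> q_states M" "D1 \<subseteq> {..<n}"
    and guess: "\<forall>j<n. \<exists>j0<n. guess_step\<^sup>*\<^sup>* ((q0, {}, j0), replicate n 0) ((q1, D1, j), p)"
    and silent: "(silent_step n M (cur_sym ws p))\<^sup>*\<^sup>* (q1, D1) (q, D)"
    and "valid_heads D p" and P: "P = advance D p"
    using assms(1) unfolding guess_inv_def by blast
  let ?i = "q_part M q"
  from assms(2) show ?thesis
    unfolding saa_step_eq_gen gen_saa_step.simps
  proof (elim disjE exE conjE)
    assume "(q, None, q') \<in> q_trans M" "P' = P"
    then have "(silent_step n M (cur_sym ws p))\<^sup>*\<^sup>* (q1, D1) (q', D)"
      using silent by (auto intro: rtranclp.rtrancl_into_rtrancl)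
    then show ?thesis
      unfolding guess_inv_def
      using \<open>q1 \<in> q_states M\<close> \<open>D1 \<subseteq> {..<n}\<close> guess \<open>valid_heads D p\<close> P \<open>P' = P\<close> by blast
  next
    fix a
    assume trans: "(q, Some a, q') \<in> q_trans M" and "?i < n" and "P ! ?i \<le> length (ws ! ?i)"
      and a: "a = (if P ! ?i < length (ws ! ?i) then Some (ws ! ?i ! (P ! ?i)) else None)"
      and P': "P' = P[?i := Suc (P ! ?i)]"
    have "?i \<notin> D"
      using \<open>P ! ?i \<le> length (ws ! ?i)\<close> \<open>valid_heads D p\<close> \<open>?i < n\<close> P by (auto simp: valid_heads_def)
    then have Pi: "P ! ?i = p ! ?i" and "?i < length p"
      using P \<open>valid_heads D p\<close> \<open>?i < n\<close> by (simp_all add: valid_heads_def)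
    show ?thesis
    proof (cases "p ! ?i < length (ws ! ?i)")
      case True
      then have "a = Some (ws ! ?i ! (p ! ?i))" "cur_sym ws p ! ?i = Some (ws ! ?i ! (p ! ?i))"
        using a Pi \<open>?i < n\<close> length_ws by simp_all
      moreover have "P' = advance D (advance {?i} p)"
        using P' Pi P \<open>?i \<notin> D\<close> \<open>?i < length p\<close> by (simp add: advance_advance_singleton)
      ultimately show ?thesis
        using guess_inv_letter[OF \<open>q1 \<in> q_states M\<close> \<open>D1 \<subseteq> {..<n}\<close> guess silent \<open>valid_heads D p\<close>]
          trans \<open>?i < n\<close> \<open>?i \<notin> D\<close> by simp
    next
      case False
      then have "p ! ?i = length (ws ! ?i)"
        using \<open>valid_heads D p\<close> \<open>?i < n\<close> by (simp add: valid_heads_def le_antisym not_less)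
      then have "valid_heads (insert ?i D) p"
        using \<open>valid_heads D p\<close> \<open>?i < n\<close> by (simp add: valid_heads_def)
      moreover have "cur_sym ws p ! ?i = None" and "a = None"
        using False a Pi \<open>?i < n\<close> length_ws by simp_all
      then have "(silent_step n M (cur_sym ws p))\<^sup>*\<^sup>* (q1, D1) (q', insert ?i D)"
        using silent trans \<open>?i < n\<close> \<open>?i \<notin> D\<close> by (auto intro: rtranclp.rtrancl_into_rtrancl)
      moreover have "P' = advance (insert ?i D) p"
        using P' Pi P \<open>?i \<notin> D\<close> \<open>?i < length p\<close> by (simp add: advance_insert)
      ultimately show ?thesis
        unfolding guess_inv_def using \<open>q1 \<in> q_states M\<close> \<open>D1 \<subseteq> {..<n}\<close> guess by blast
    qed
  qed
qed

lemma guess_inv_reachable: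
  assumes "(saa_step n M ws)\<^sup>*\<^sup>* (q0, replicate n 0) (q, P)" and "q0 \<in> q_init M"
  shows "guess_inv q0 q P"
  using assms(1)
proof (induction rule: rtranclp_induct2)
  case refl
  have "q0 \<in> q_states M"
    using saa_wf_init_final[OF wf] assms(2) by blast
  then show ?case
    unfolding guess_inv_def using length_ws
    by (intro exI[of _ q0] exI[of _ "{}"] exI[of _ "replicate n 0"]) (auto simp: valid_heads_def)
next
  case (step q P q' P')
  then show ?case
    using guess_inv_step by blast
qed

lemma valid_heads_at_end:
  assumes "valid_heads D p" and "advance D p = map (\<lambda>w. Suc (length w)) ws"
  shows "D = {..<n}" and "p = map length ws"
proof -
  have "i \<in> D \<and> p ! i = length (ws ! i)" if "i < n" for i
  proof -
    have "advance D p ! i = Suc (length (ws ! i))"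
      using assms(2) that length_ws by simp
    then show ?thesis
      using assms(1) that by (auto simp: valid_heads_def split: if_splits)
  qed
  then show "D = {..<n}" and "p = map length ws"
    using assms(1) length_ws by (auto simp: valid_heads_def intro: nth_equalityI)
qed

lemma guess_accepts_iff:
  assumes "n \<ge> 1"
  shows "guess_accepts n M ws \<longleftrightarrow> saa_accepts n M ws"
proof
  assume "guess_accepts n M ws"
  then obtain q0 j0 q D j qf where "q0 \<in> q_init M" "qf \<in> q_final M"
    and run: "guess_step\<^sup>*\<^sup>* ((q0, {}, j0), replicate n 0) ((q, D, j), map length ws)"
    and final: "(silent_step n M (replicate n None))\<^sup>*\<^sup>* (q, D) (qf, {..<n})"
    unfolding gen_faa_accepts_def guess_init_def guess_final_def by fastforce
  from guess_run_saa_run[OF run] have "valid_heads D (map length ws)"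
    and "(saa_step n M ws)\<^sup>*\<^sup>* (q0, replicate n 0) (q, advance D (map length ws))"
    by auto
  moreover have "(saa_step n M ws)\<^sup>*\<^sup>* (q, advance D (map length ws)) (qf, map (\<lambda>w. Suc (length w)) ws)"
    using silent_steps_saa_run[of "map length ws" q D qf "{..<n}"] final \<open>valid_heads D (map length ws)\<close>
      length_ws cur_sym_map_length[of ws]
    by (simp add: advance_lessThan comp_def)
  ultimately show "saa_accepts n M ws"
    unfolding saa_accepts_def using length_ws \<open>q0 \<in> q_init M\<close> \<open>qf \<in> q_final M\<close>
    by (blast intro: rtranclp_trans)
next
  assume "saa_accepts n M ws"
  then obtain q0 qf where "q0 \<in> q_init M" "qf \<in> q_final M"
    and run: "(saa_step n M ws)\<^sup>*\<^sup>* (q0, replicate n 0) (qf, map (\<lambda>w. Suc (length w)) ws)"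
    unfolding saa_accepts_def by blast
  from guess_inv_reachable[OF run \<open>q0 \<in> q_init M\<close>] obtain q1 D1 D p
    where "q1 \<in> q_states M" "D1 \<subseteq> {..<n}"
      and guess: "\<forall>j<n. \<exists>j0<n. guess_step\<^sup>*\<^sup>* ((q0, {}, j0), replicate n 0) ((q1, D1, j), p)"
      and silent: "(silent_step n M (cur_sym ws p))\<^sup>*\<^sup>* (q1, D1) (qf, D)"
      and "valid_heads D p" and "advance D p = map (\<lambda>w. Suc (length w)) ws"
    unfolding guess_inv_def by metis
  then have "D = {..<n}" and "p = map length ws"
    using valid_heads_at_end by blast+
  moreover obtain j0 where "j0 < n" "guess_step\<^sup>*\<^sup>* ((q0, {}, j0), replicate n 0) ((q1, D1, 0), p)"
    using guess assms by auto
  ultimately have "(q1, D1, 0) \<in> guess_final n M" and "(q0, {}, j0) \<in> guess_init n M"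
    and "guess_step\<^sup>*\<^sup>* ((q0, {}, j0), replicate n 0) ((q1, D1, 0), map length ws)"
    using silent \<open>q1 \<in> q_states M\<close> \<open>D1 \<subseteq> {..<n}\<close> \<open>qf \<in> q_final M\<close> \<open>q0 \<in> q_init M\<close> assms length_ws
      cur_sym_map_length[of ws]
    by (auto simp: guess_final_def guess_init_def guess_states_def)
  then show "guess_accepts n M ws"
    unfolding gen_faa_accepts_def using length_ws by blast
qed

end

lemma saa_to_dfaa:
  fixes M :: "'a saa"
  assumes wf: "saa_wf n M" and "n \<ge> 1"
  shows "\<exists>M'::'a faa. is_dfaa n M' \<and> faa_lang n M' = saa_lang n M"
proof -
  have "\<exists>M'::'a faa. is_dfaa n M' \<and> faa_lang n M' = {ws. guess_accepts n M ws}"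
  proof (rule ex_dfaa_eq_gen_faa)
    show "finite (guess_states n M)"
      using wf by (simp add: guess_states_def saa_wf_def)
    show "guess_init n M \<subseteq> guess_states n M"
      using saa_wf_init_final[OF wf] by (auto simp: guess_init_def guess_states_def)
    show "guess_final n M \<subseteq> guess_states n M"
      by (auto simp: guess_final_def)
    show "fst (guess_delta n M s \<sigma>) \<subseteq> guess_states n M"
      if "s \<in> guess_states n M" for s and \<sigma> :: "'a option list"
      using that saa_wf_trans[OF wf] silent_steps_subset
      by (cases s) (fastforce simp: guess_states_def)
    show "snd (guess_delta n M s \<sigma>) \<subseteq> filters n"
      if "s \<in> guess_states n M" for s and \<sigma> :: "'a option list"
      using that by (cases s) (auto simp: guess_states_def filters_def)
    show "i \<notin> \<chi>"
      if "fst (guess_delta n M s \<sigma>) \<noteq> {}" "\<sigma> ! i = None" "\<chi> \<in> snd (guess_delta n M s \<sigma>)"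
      for s \<sigma> i \<chi>
      using that by (cases s) auto
    show "card (snd (guess_delta n M s \<sigma>)) \<le> 1" for s \<sigma>
      by (cases s) simp
  qed
  moreover have "guess_accepts n M ws \<longleftrightarrow> saa_accepts n M ws" for ws
    using guess_accepts_iff[OF wf _ \<open>n \<ge> 1\<close>]
    by (cases "length ws = n") (auto simp: gen_faa_accepts_def saa_accepts_def)
  ultimately show ?thesis
    by (simp add: saa_lang_def)
qed

theorem mainTheorem7:
  fixes L :: "('a::finite) list list set" and n :: nat
  assumes "n \<ge> 1" and "\<forall>w\<in>L. length w = n"
  shows "((\<exists>M::'a faa. faa_wf n M \<and> faa_lang n M = L) \<longleftrightarrow>
            (\<exists>M::'a faa. is_dfaa n M \<and> faa_lang n M = L)) \<and>
         ((\<exists>M::'a faa. is_dfaa n M \<and> faa_lang n M = L) \<longleftrightarrow>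
            (\<exists>M::'a saa. saa_wf n M \<and> saa_lang n M = L))"
proof -
  have faa_saa: "\<exists>M::'a saa. saa_wf n M \<and> saa_lang n M = L"
    if "\<exists>M::'a faa. faa_wf n M \<and> faa_lang n M = L"
    using that faa_to_saa[OF _ \<open>n \<ge> 1\<close>] by metis
  have saa_dfaa: "\<exists>M::'a faa. is_dfaa n M \<and> faa_lang n M = L"
    if "\<exists>M::'a saa. saa_wf n M \<and> saa_lang n M = L"
    using that saa_to_dfaa[OF _ \<open>n \<ge> 1\<close>] by metis
  have dfaa_faa: "\<exists>M::'a faa. faa_wf n M \<and> faa_lang n M = L"
    if "\<exists>M::'a faa. is_dfaa n M \<and> faa_lang n M = L"
    using that unfolding is_dfaa_def by blast
  show ?thesis
    using faa_saa saa_dfaa dfaa_faa by blast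
qed

end
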